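(* Let $u$ be a quasi-definite linear functional on $\mathbb C[\boldsymbol x]$, let $\boldsymbol x_1,\dots,\boldsymbol x_q\in\mathbb R^D$ be distinct, $\xi_1,\dots,\xi_q\in\mathbb C$, and $\hat u=u+\sum_{i=1}^q\xi_i\delta(\boldsymbol x-\boldsymbol x_i)$ (i.e. $\langle\hat u,P\rangle=\langle u,P\rangle+\sum_i\xi_iP(\boldsymbol x_i)$), assumed quasi-definite. Let $M$ be the $q\times q$ matrix with entries $M_{ij}=\delta_{ij}+\xi_iK_{n-1}(\boldsymbol x_i,\boldsymbol x_j)$. Then for $n\ge1$ $$\hat P_{[n]}(\boldsymbol x)=\Theta_*\begin{pmatrix}M&\begin{matrix}\xi_1K_{n-1}(\boldsymbol x_1,\boldsymbol x)\\ \vdots\\ \xi_qK_{n-1}(\boldsymbol x_q,\boldsymbol x)\end{matrix}\\ \begin{matrix}P_{[n]}(\boldsymbol x_1)&\cdots&P_{[n]}(\boldsymbol x_q)\end{matrix}&P_{[n]}(\boldsymbol x)\end{pmatrix},\qquad \hat H_{[n]}=\Theta_*\begin{pmatrix}M&\begin{matrix}-\xi_1P_{[n]}(\boldsymbol x_1)^\top\\ \vdots\\ -\xi_qP_{[n]}(\boldsymbol x_q)^\top\end{matrix}\\ \begin{matrix}P_{[n]}(\boldsymbol x_1)&\cdots&P_{[n]}(\boldsymbol x_q)\end{matrix}&H_{[n]}\end{pmatrix}.$$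
   Context: Multi-indices ordered by graded lexicographic order; $\chi(\boldsymbol x)$ the semi-infinite vector of monomials with blocks $\chi_{[k]}$. For a linear functional $u$ on $\mathbb C[\boldsymbol x]$, moment matrix $G=\langle u,\chi\chi^\top\rangle$; quasi-definite: all block truncations nonsingular; then $G=S^{-1}HS^{-\top}$, $S$ block lower unitriangular, $H$ block diagonal with blocks $H_{[k]}$; $P=S\chi$ with blocks $P_{[k]}$ (column vectors of polynomials) are the monic orthogonal polynomials; hats refer to $\hat u$. $K_{n-1}(\boldsymbol x,\boldsymbol y)=\sum_{m=0}^{n-1}P_{[m]}(\boldsymbol x)^\top H_{[m]}^{-1}P_{[m]}(\boldsymbol y)$. Last quasi-determinant: $\Theta_*\begin{pmatrix}A&B\\C&D\end{pmatrix}=D-CA^{-1}B$. *)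

theory Defs
  imports Complex_Main "Jordan_Normal_Form.Determinant"
begin

text \<open>Multi-indices in D variables are lists of naturals of length D.
  The block of degree k, listed in graded lexicographic order (x1^k, x1^(k-1) x2, ..., xD^k).\<close>
fun mons :: "nat \<Rightarrow> nat \<Rightarrow> nat list list" where
  "mons 0 k = (if k = 0 then [[]] else [])"
| "mons (Suc d) k = concat (map (\<lambda>a. map (Cons a) (mons d (k - a))) (rev [0..<Suc k]))"

definition mi :: "nat \<Rightarrow> nat list \<Rightarrow> bool" where
  "mi D \<alpha> \<longleftrightarrow> length \<alpha> = D"

definition lowset :: "nat \<Rightarrow> nat \<Rightarrow> nat list set" where
  "lowset D k = {\<gamma>. length \<gamma> = D \<and> sum_list \<gamma> \<le> k}"

text \<open>A linear functional u on C[x] is given by its moments m alpha = <u, x^alpha>.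
  Moment matrix entries G_(alpha,beta) = <u, x^alpha x^beta>.\<close>
definition gm :: "(nat list \<Rightarrow> complex) \<Rightarrow> nat list \<Rightarrow> nat list \<Rightarrow> complex" where
  "gm m \<alpha> \<beta> = m (map2 (+) \<alpha> \<beta>)"

definition monval :: "complex list \<Rightarrow> nat list \<Rightarrow> complex" where
  "monval x \<alpha> = prod_list (map2 (^) x \<alpha>)"

definition idx :: "nat \<Rightarrow> nat \<Rightarrow> nat list list" where
  "idx D N = concat (map (mons D) [0..<N])"

definition trunc :: "nat \<Rightarrow> (nat list \<Rightarrow> complex) \<Rightarrow> nat \<Rightarrow> complex mat" where
  "trunc D m N = (let I = idx D N in mat (length I) (length I) (\<lambda>(i,j). gm m (I!i) (I!j)))"

definition quasi_definite :: "nat \<Rightarrow> (nat list \<Rightarrow> complex) \<Rightarrow> bool" where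
  "quasi_definite D m \<longleftrightarrow> (\<forall>N\<ge>1. det (trunc D m N) \<noteq> 0)"

definition block_unitri :: "nat \<Rightarrow> (nat list \<Rightarrow> nat list \<Rightarrow> complex) \<Rightarrow> bool" where
  "block_unitri D S \<longleftrightarrow> (\<forall>\<alpha> \<beta>.
      (\<not> (mi D \<alpha> \<and> mi D \<beta>) \<longrightarrow> S \<alpha> \<beta> = 0) \<and>
      (mi D \<alpha> \<and> mi D \<beta> \<and> sum_list \<alpha> < sum_list \<beta> \<longrightarrow> S \<alpha> \<beta> = 0) \<and>
      (mi D \<alpha> \<and> mi D \<beta> \<and> sum_list \<alpha> = sum_list \<beta> \<longrightarrow> S \<alpha> \<beta> = (if \<alpha> = \<beta> then 1 else 0)))"

text \<open>Entries of S G S^T (sums are exact since S is block lower triangular).\<close>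
definition sgs :: "nat \<Rightarrow> (nat list \<Rightarrow> complex) \<Rightarrow> (nat list \<Rightarrow> nat list \<Rightarrow> complex)
    \<Rightarrow> nat list \<Rightarrow> nat list \<Rightarrow> complex" where
  "sgs D m S \<alpha> \<beta> = (\<Sum>\<gamma>\<in>lowset D (sum_list \<alpha>). \<Sum>\<delta>\<in>lowset D (sum_list \<beta>).
       S \<alpha> \<gamma> * gm m \<gamma> \<delta> * S \<beta> \<delta>)"

text \<open>G = S^-1 H S^-T with H block diagonal, i.e. S G S^T = H block diagonal.\<close>
definition ldl :: "nat \<Rightarrow> (nat list \<Rightarrow> complex) \<Rightarrow> (nat list \<Rightarrow> nat list \<Rightarrow> complex) \<Rightarrow> bool" where
  "ldl D m S \<longleftrightarrow> block_unitri D S \<and>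
     (\<forall>\<alpha> \<beta>. mi D \<alpha> \<and> mi D \<beta> \<and> sum_list \<alpha> \<noteq> sum_list \<beta> \<longrightarrow> sgs D m S \<alpha> \<beta> = 0)"

definition Sfac :: "nat \<Rightarrow> (nat list \<Rightarrow> complex) \<Rightarrow> nat list \<Rightarrow> nat list \<Rightarrow> complex" where
  "Sfac D m = (THE S. ldl D m S)"

definition Hblk :: "nat \<Rightarrow> (nat list \<Rightarrow> complex) \<Rightarrow> nat \<Rightarrow> complex mat" where
  "Hblk D m k = (let I = mons D k in
     mat (length I) (length I) (\<lambda>(i,j). sgs D m (Sfac D m) (I!i) (I!j)))"

definition Pvec :: "nat \<Rightarrow> (nat list \<Rightarrow> complex) \<Rightarrow> nat \<Rightarrow> complex list \<Rightarrow> complex mat" where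
  "Pvec D m k x = (let I = mons D k in
     mat (length I) 1 (\<lambda>(i,j). \<Sum>\<gamma>\<in>lowset D k. Sfac D m (I!i) \<gamma> * monval x \<gamma>))"

definition minv :: "complex mat \<Rightarrow> complex mat" where
  "minv A = (THE B. B \<in> carrier_mat (dim_row A) (dim_row A) \<and>
              A * B = 1\<^sub>m (dim_row A) \<and> B * A = 1\<^sub>m (dim_row A))"

text \<open>kernel D m n x y = K_(n-1)(x,y) = sum over k < n of P_[k](x)^T H_[k]^-1 P_[k](y).\<close>
definition kernel :: "nat \<Rightarrow> (nat list \<Rightarrow> complex) \<Rightarrow> nat \<Rightarrow> complex list \<Rightarrow> complex list \<Rightarrow> complex" where
  "kernel D m n x y = (\<Sum>k<n. (transpose_mat (Pvec D m k x) * minv (Hblk D m k) * Pvec D m k y) $$ (0,0))"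

text \<open>Last quasi-determinant of the block matrix (A B; C Dm).\<close>
definition qdet :: "complex mat \<Rightarrow> complex mat \<Rightarrow> complex mat \<Rightarrow> complex mat \<Rightarrow> complex mat" where
  "qdet A B C Dm = Dm - C * minv A * B"

definition dirac_pert :: "(nat list \<Rightarrow> complex) \<Rightarrow> nat \<Rightarrow> (nat \<Rightarrow> complex) \<Rightarrow> (nat \<Rightarrow> real list)
    \<Rightarrow> nat list \<Rightarrow> complex" where
  "dirac_pert m q \<xi> pts \<alpha> = m \<alpha> + (\<Sum>i<q. \<xi> i * monval (map of_real (pts i)) \<alpha>)"

end

theory Submission
  imports Defs
begin

text \<open>
  The perturbed monic polynomial \<open>\<hat>P\<^sub>n\<close> differs from \<open>P\<^sub>n\<close> by a polynomial of degree
  \<open>< n\<close>, which the reproducing kernel \<open>K\<^sub>n\<^sub>-\<^sub>1\<close> recovers from its moments against \<open>u\<close>.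
  As \<open>P\<^sub>n\<close> is \<open>u\<close>-orthogonal and \<open>\<hat>P\<^sub>n\<close> is \<open>\<hat>u\<close>-orthogonal to lower degrees, these moments
  come from the Dirac part alone:
  \<open>\<hat>P\<^sub>n(x) = P\<^sub>n(x) - (\<Sum>i. \<xi>\<^sub>i \<hat>P\<^sub>n(x\<^sub>i) K\<^sub>n\<^sub>-\<^sub>1(x\<^sub>i, x))\<close>.
  At the nodes this is the linear system \<open>[\<hat>P\<^sub>n(x\<^sub>1) \<dots> \<hat>P\<^sub>n(x\<^sub>q)] M = [P\<^sub>n(x\<^sub>1) \<dots> P\<^sub>n(x\<^sub>q)]\<close>,
  and \<open>M\<close> is invertible because \<open>\<hat>u\<close> is quasi-definite; solving it gives the first formula.
  The second follows from
  \<open>\<hat>H\<^sub>n = \<langle>\<hat>u, \<hat>P\<^sub>n P\<^sub>n\<^sup>T\<rangle> = H\<^sub>n + (\<Sum>i. \<xi>\<^sub>i \<hat>P\<^sub>n(x\<^sub>i) P\<^sub>n(x\<^sub>i)\<^sup>T)\<close>.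
\<close>

lemma sum_nth_distinct: "distinct xs \<Longrightarrow> (\<Sum>j<length xs. f (xs ! j)) = (\<Sum>\<delta>\<in>set xs. f \<delta>)"
  by (metis sum.reindex_bij_betw bij_betw_nth)

lemma distinct_concat_map: "distinct xs \<Longrightarrow> (\<forall>x\<in>set xs. distinct (f x)) \<Longrightarrow>
  (\<forall>x\<in>set xs. \<forall>y\<in>set xs. x \<noteq> y \<longrightarrow> set (f x) \<inter> set (f y) = {}) \<Longrightarrow> distinct (concat (map f xs))"
  by (induction xs) auto

lemma map2_plus_commute: "map2 (+) a b = map2 (+) b (a :: 'a::ab_semigroup_add list)"
proof (induction a arbitrary: b)
  case Nil then show ?case by simp
next
  case (Cons x a) then show ?case by (cases b) (auto simp: add.commute)
qed

lemma sum_eq_single: "j \<in> A \<Longrightarrow> finite A \<Longrightarrow> (\<And>k. k \<in> A \<Longrightarrow> k \<noteq> j \<Longrightarrow> T k = 0) \<Longrightarrow> sum T A = (T j :: 'a::comm_monoid_add)"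
  by (metis sum.remove sum.neutral DiffE insertCI add_0_right insert_Diff)

lemma sum_sum_mult: "(\<Sum>\<delta>\<in>L. (\<Sum>j\<in>J. F j \<delta>) * (Y \<delta> :: 'a::semiring_0)) = (\<Sum>j\<in>J. \<Sum>\<delta>\<in>L. F j \<delta> * Y \<delta>)"
  by (simp add: sum_distrib_right) (rule sum.swap)

lemma sum_scale_mult: "(\<Sum>\<delta>\<in>L. (c * a \<delta>) * (Y \<delta> :: 'a::comm_semiring_0)) = c * (\<Sum>\<delta>\<in>L. a \<delta> * Y \<delta>)"
  by (simp add: sum_distrib_left mult_ac)

lemma sum_diff_mult: "(\<Sum>\<delta>\<in>L. (a \<delta> - b \<delta>) * (Y \<delta> :: 'a::ring)) = (\<Sum>\<delta>\<in>L. a \<delta> * Y \<delta>) - (\<Sum>\<delta>\<in>L. b \<delta> * Y \<delta>)"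
  by (simp add: left_diff_distrib sum_subtractf)

lemma sum_mult_sum_scale:
  "(\<Sum>\<delta>\<in>L. (s \<delta> :: 'a::comm_semiring_0) * (\<Sum>i\<in>I. c i * Y i \<delta>)) = (\<Sum>i\<in>I. c i * (\<Sum>\<delta>\<in>L. s \<delta> * Y i \<delta>))"
proof -
  have "(\<Sum>\<delta>\<in>L. s \<delta> * (\<Sum>i\<in>I. c i * Y i \<delta>)) = (\<Sum>\<delta>\<in>L. \<Sum>i\<in>I. c i * (s \<delta> * Y i \<delta>))"
    by (simp add: sum_distrib_left mult.left_commute)
  also have "\<dots> = (\<Sum>i\<in>I. \<Sum>\<delta>\<in>L. c i * (s \<delta> * Y i \<delta>))" by (rule sum.swap)
  also have "\<dots> = (\<Sum>i\<in>I. c i * (\<Sum>\<delta>\<in>L. s \<delta> * Y i \<delta>))" by (simp add: sum_distrib_left)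
  finally show ?thesis .
qed

lemma index_mult_mat_sum:
  assumes "A \<in> carrier_mat p r" "B \<in> carrier_mat r s" "i < p" "j < s"
  shows "(A * B) $$ (i,j) = (\<Sum>b<r. A $$ (i,b) * B $$ (b,j))"
  using assms by (auto simp: scalar_prod_def lessThan_atLeast0 intro!: sum.cong)

lemma transpose_mult_mult_entry:
  fixes H :: "'a::comm_semiring_0 mat"
  assumes p: "p \<in> carrier_mat r 1" and H: "H \<in> carrier_mat r r" and q: "q \<in> carrier_mat r 1"
  shows "(transpose_mat p * H * q) $$ (0,0) = (\<Sum>a<r. \<Sum>b<r. H $$ (a,b) * q $$ (b,0) * p $$ (a,0))"
proof -
  have pH: "transpose_mat p * H \<in> carrier_mat 1 r" using p H by auto
  have "(transpose_mat p * H * q) $$ (0,0) = (\<Sum>b<r. (transpose_mat p * H) $$ (0,b) * q $$ (b,0))"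
    by (rule index_mult_mat_sum[OF pH q]) auto
  also have "\<dots> = (\<Sum>b<r. (\<Sum>a<r. p $$ (a,0) * H $$ (a,b)) * q $$ (b,0))"
    using index_mult_mat_sum[of "transpose_mat p" 1 r H r 0] p H by (auto intro!: sum.cong)
  also have "\<dots> = (\<Sum>a<r. \<Sum>b<r. H $$ (a,b) * q $$ (b,0) * p $$ (a,0))"
    unfolding sum_distrib_right by (subst sum.swap) (simp add: mult_ac)
  finally show ?thesis .
qed

lemma id_plus_mult_vec_entry:
  fixes K :: "nat \<Rightarrow> nat \<Rightarrow> complex"
  assumes v: "v \<in> carrier_vec q" and i: "i < q"
  shows "(mat q q (\<lambda>(i,j). (if i = j then 1 else 0) + c i * K i j) *\<^sub>v v) $ i = v $ i + c i * (\<Sum>j<q. v $ j * K i j)"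
proof -
  have "(mat q q (\<lambda>(i,j). (if i = j then 1 else 0) + c i * K i j) *\<^sub>v v) $ i =
     (\<Sum>j<q. ((if i = j then 1 else 0) + c i * K i j) * v $ j)"
    using v i by (auto simp: scalar_prod_def lessThan_atLeast0 intro!: sum.cong)
  also have "\<dots> = (\<Sum>j<q. (if i = j then v $ j else 0) + c i * (v $ j * K i j))"
    by (rule sum.cong[OF refl]) (simp add: algebra_simps)
  also have "\<dots> = v $ i + c i * (\<Sum>j<q. v $ j * K i j)"
    using i by (simp add: sum.distrib sum_distrib_left)
  finally show ?thesis .
qed

lemma mult_id_plus_entry:
  fixes K :: "nat \<Rightarrow> nat \<Rightarrow> complex"
  assumes A: "A \<in> carrier_mat p q" and a: "a < p" and j: "j < q"
  shows "(A * mat q q (\<lambda>(i,j). (if i = j then 1 else 0) + c i * K i j)) $$ (a,j) =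
     A $$ (a,j) + (\<Sum>i<q. A $$ (a,i) * c i * K i j)"
proof -
  have "(A * mat q q (\<lambda>(i,j). (if i = j then 1 else 0) + c i * K i j)) $$ (a,j) =
     (\<Sum>i<q. A $$ (a,i) * ((if i = j then 1 else 0) + c i * K i j))"
    using A a j by (auto simp: scalar_prod_def lessThan_atLeast0 intro!: sum.cong)
  also have "\<dots> = (\<Sum>i<q. (if i = j then A $$ (a,i) else 0) + A $$ (a,i) * c i * K i j)"
    by (rule sum.cong[OF refl]) (simp add: algebra_simps)
  also have "\<dots> = A $$ (a,j) + (\<Sum>i<q. A $$ (a,i) * c i * K i j)"
    using j by (simp add: sum.distrib)
  finally show ?thesis .
qed

lemma minv_inverse:
  assumes A: "A \<in> carrier_mat k k" and d: "det A \<noteq> 0"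
  shows "minv A \<in> carrier_mat k k \<and> A * minv A = 1\<^sub>m k \<and> minv A * A = 1\<^sub>m k"
proof -
  have "A \<in> Units (ring_mat TYPE(complex) k undefined)" by (rule det_non_zero_imp_unit[OF A d])
  then obtain B where B: "B \<in> carrier_mat k k" "B * A = 1\<^sub>m k" "A * B = 1\<^sub>m k"
    unfolding Units_def ring_mat_def by auto
  have dr: "dim_row A = k" using A by auto
  have "minv A = B" unfolding minv_def dr
  proof (rule the_equality)
    show "B \<in> carrier_mat k k \<and> A * B = 1\<^sub>m k \<and> B * A = 1\<^sub>m k" using B by auto
  next
    fix C assume C: "C \<in> carrier_mat k k \<and> A * C = 1\<^sub>m k \<and> C * A = 1\<^sub>m k"
    have "C = (B * A) * C" using B C by auto
    also have "\<dots> = B * (A * C)" using B C A by (metis assoc_mult_mat)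
    also have "\<dots> = B" using B C by auto
    finally show "C = B" .
  qed
  then show ?thesis using B by auto
qed

lemma det_nonzero_if_kernel_trivial:
  assumes A: "(A :: complex mat) \<in> carrier_mat k k" and ker: "\<And>v. v \<in> carrier_vec k \<Longrightarrow> A *\<^sub>v v = 0\<^sub>v k \<Longrightarrow> v = 0\<^sub>v k"
  shows "det A \<noteq> 0"
  using det_0_iff_vec_prod_zero[OF A] ker by auto

section \<open>Multi-indices and truncated moment matrices\<close>

lemma set_mons: "set (mons d k) = {\<gamma>. length \<gamma> = d \<and> sum_list \<gamma> = k}"
proof (induction d arbitrary: k)
  case 0 then show ?case by auto
next
  case (Suc d)
  have "set (mons (Suc d) k) \<subseteq> {\<gamma>. length \<gamma> = Suc d \<and> sum_list \<gamma> = k}"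
    using Suc by auto
  moreover have "g \<in> set (mons (Suc d) k)" if g: "g \<in> {\<gamma>. length \<gamma> = Suc d \<and> sum_list \<gamma> = k}" for g
  proof -
    obtain a t where gt: "g = a # t" using g by (cases g) auto
    with g have "a \<le> k" "length t = d" "sum_list t = k - a" by auto
    then show "g \<in> set (mons (Suc d) k)" using Suc gt by (auto intro!: bexI[of _ a])
  qed
  ultimately show ?case by blast
qed

lemma distinct_mons: "distinct (mons d k)"
proof (induction d arbitrary: k)
  case 0 then show ?case by auto
next
  case (Suc d)
  show ?case unfolding mons.simps
    by (rule distinct_concat_map) (auto simp: Suc distinct_map)
qed

lemma mons_nth: "a < length (mons D k) \<Longrightarrow> length (mons D k ! a) = D \<and> sum_list (mons D k ! a) = k"
  using set_mons[of D k] nth_mem by blast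

lemma finite_lowset: "finite (lowset D k)"
proof -
  have "lowset D k \<subseteq> {xs. set xs \<subseteq> {0..k} \<and> length xs = D}"
    unfolding lowset_def using member_le_sum_list by fastforce
  moreover have "finite {xs. set xs \<subseteq> {0..k} \<and> length xs = D}"
    by (rule finite_lists_length_eq) auto
  ultimately show ?thesis by (rule finite_subset)
qed

definition lowset_less :: "nat \<Rightarrow> nat \<Rightarrow> nat list set" where
  "lowset_less D N = {\<gamma>. length \<gamma> = D \<and> sum_list \<gamma> < N}"

lemma set_idx: "set (idx D N) = lowset_less D N"
  unfolding idx_def lowset_less_def by (auto simp: set_mons)

lemma distinct_idx: "distinct (idx D N)"
  unfolding idx_def by (rule distinct_concat_map) (auto simp: distinct_mons set_mons)

lemma gm_sym: "gm m a b = gm m b a"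
  unfolding gm_def using map2_plus_commute by metis

lemma monval_map2_plus: "length x = length \<gamma> \<Longrightarrow> length \<delta> = length \<gamma> \<Longrightarrow>
  monval x (map2 (+) \<gamma> \<delta>) = monval x \<gamma> * monval x \<delta>"
proof (induction x arbitrary: \<gamma> \<delta>)
  case Nil then show ?case by (simp add: monval_def)
next
  case (Cons a x) then show ?case by (cases \<gamma>; cases \<delta>) (auto simp: monval_def power_add mult_ac)
qed

lemma gm_dirac_pert:
  assumes "\<forall>i<q. length (pts i) = D" "length \<gamma> = D" "length \<delta> = D"
  shows "gm (dirac_pert m q \<xi> pts) \<gamma> \<delta> = gm m \<gamma> \<delta> +
     (\<Sum>i<q. \<xi> i * monval (map of_real (pts i)) \<gamma> * monval (map of_real (pts i)) \<delta>)"
  unfolding gm_def dirac_pert_def using assms by (auto simp: monval_map2_plus mult.assoc intro!: sum.cong)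

lemma trunc_carrier: "trunc D m N \<in> carrier_mat (length (idx D N)) (length (idx D N))"
  unfolding trunc_def Let_def by auto

lemma trunc_entry: "i < length (idx D N) \<Longrightarrow> j < length (idx D N) \<Longrightarrow>
   trunc D m N $$ (i,j) = gm m (idx D N ! i) (idx D N ! j)"
  unfolding trunc_def Let_def by auto

lemma det_trunc_nonzero:
  assumes "quasi_definite D m"
  shows "det (trunc D m N) \<noteq> 0"
proof (cases "N = 0")
  case True
  then have "trunc D m N \<in> carrier_mat 0 0" using trunc_carrier[of D m N] by (simp add: idx_def)
  then show ?thesis by (simp add: det_def)
next
  case False
  then show ?thesis using assms unfolding quasi_definite_def by simp
qed

lemma trunc_moments_nondegenerate:
  assumes qd: "quasi_definite D m"
    and supp: "\<forall>\<delta>. \<delta> \<notin> lowset_less D N \<longrightarrow> d \<delta> = 0"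
    and orth: "\<forall>\<gamma>\<in>lowset_less D N. (\<Sum>\<delta>\<in>lowset_less D N. d \<delta> * gm m \<delta> \<gamma>) = 0"
  shows "d = (\<lambda>_. 0)"
proof -
  let ?I = "idx D N" let ?A = "trunc D m N"
  define v where "v = vec (length ?I) (\<lambda>j. d (?I ! j))"
  have sI: "set ?I = lowset_less D N" by (rule set_idx)
  have dI: "distinct ?I" by (rule distinct_idx)
  have "?A *\<^sub>v v = 0\<^sub>v (length ?I)"
  proof (rule eq_vecI)
    fix i assume i: "i < dim_vec (0\<^sub>v (length ?I))"
    hence i': "i < length ?I" by simp
    have "(?A *\<^sub>v v) $ i = (\<Sum>j<length ?I. gm m (?I ! i) (?I ! j) * d (?I ! j))"
      using i' trunc_carrier[of D m N] by (auto simp: scalar_prod_def v_def trunc_entry lessThan_atLeast0 intro!: sum.cong)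
    also have "\<dots> = (\<Sum>\<delta>\<in>lowset_less D N. d \<delta> * gm m \<delta> (?I ! i))"
      using sum_nth_distinct[OF dI, of "\<lambda>\<delta>. gm m (?I ! i) \<delta> * d \<delta>"] sI
      by (simp add: gm_sym mult.commute)
    also have "\<dots> = 0" using orth i' sI nth_mem by blast
    finally show "(?A *\<^sub>v v) $ i = 0\<^sub>v (length ?I) $ i" using i by simp
  qed (use trunc_carrier[of D m N] in auto)
  then have "v = 0\<^sub>v (length ?I)"
    using det_0_iff_vec_prod_zero[OF trunc_carrier[of D m N]] det_trunc_nonzero[OF qd]
    unfolding v_def by (meson vec_carrier)
  hence "\<forall>j<length ?I. d (?I ! j) = 0" unfolding v_def
    by (metis index_vec index_zero_vec(1))
  hence "\<forall>\<delta>\<in>lowset_less D N. d \<delta> = 0" using sI by (metis in_set_conv_nth)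
  then show ?thesis using supp by auto
qed

lemma trunc_moments_solvable:
  assumes qd: "quasi_definite D m"
  shows "\<exists>w. (\<forall>\<delta>. \<delta> \<notin> lowset_less D N \<longrightarrow> w \<delta> = 0) \<and> (\<forall>\<gamma>\<in>lowset_less D N. (\<Sum>\<delta>\<in>lowset_less D N. w \<delta> * gm m \<delta> \<gamma>) = b \<gamma>)"
proof -
  let ?I = "idx D N" let ?A = "trunc D m N" let ?n = "length ?I"
  have sI: "set ?I = lowset_less D N" by (rule set_idx)
  have dI: "distinct ?I" by (rule distinct_idx)
  from minv_inverse[OF trunc_carrier det_trunc_nonzero[OF qd]] have B: "minv ?A \<in> carrier_mat ?n ?n" "?A * minv ?A = 1\<^sub>m ?n" by auto
  define bv where "bv = vec ?n (\<lambda>i. b (?I ! i))"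
  define y where "y = minv ?A *\<^sub>v bv"
  have Ay: "?A *\<^sub>v y = bv" unfolding y_def
    using B trunc_carrier[of D m N] by (metis assoc_mult_mat_vec bv_def one_mult_mat_vec vec_carrier)
  have dy: "dim_vec y = ?n" using B by (simp add: y_def)
  define ix where "ix \<delta> = (SOME j. j < ?n \<and> ?I ! j = \<delta>)" for \<delta>
  have ixI: "ix (?I ! j) = j" if "j < ?n" for j
  proof -
    have "\<exists>j'. j' < ?n \<and> ?I ! j' = ?I ! j" using that by blast
    from someI_ex[OF this] have "ix (?I ! j) < ?n \<and> ?I ! (ix (?I ! j)) = ?I ! j" unfolding ix_def .
    then show ?thesis using dI that nth_eq_iff_index_eq by blast
  qed
  define w where "w \<delta> = (if \<delta> \<in> lowset_less D N then y $ ix \<delta> else 0)" for \<delta>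
  have wI: "w (?I ! j) = y $ j" if "j < ?n" for j
    using that sI nth_mem ixI unfolding w_def by (metis)
  show ?thesis
  proof (intro exI conjI allI impI ballI)
    fix \<delta> assume "\<delta> \<notin> lowset_less D N" then show "w \<delta> = 0" by (simp add: w_def)
  next
    fix \<gamma> assume g: "\<gamma> \<in> lowset_less D N"
    then obtain i where i: "i < ?n" "\<gamma> = ?I ! i" using sI by (metis in_set_conv_nth)
    have "(\<Sum>\<delta>\<in>lowset_less D N. w \<delta> * gm m \<delta> \<gamma>) = (\<Sum>j<?n. w (?I ! j) * gm m (?I ! j) \<gamma>)"
      using sum_nth_distinct[OF dI, of "\<lambda>\<delta>. w \<delta> * gm m \<delta> \<gamma>"] sI by simp
    also have "\<dots> = (\<Sum>j<?n. ?A $$ (i,j) * y $ j)"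
      using i by (auto simp: wI trunc_entry gm_sym mult.commute intro!: sum.cong)
    also have "\<dots> = (?A *\<^sub>v y) $ i"
      using i trunc_carrier[of D m N] dy by (auto simp: scalar_prod_def lessThan_atLeast0 intro!: sum.cong)
    also have "\<dots> = b \<gamma>" using Ay i by (simp add: bv_def)
    finally show "(\<Sum>\<delta>\<in>lowset_less D N. w \<delta> * gm m \<delta> \<gamma>) = b \<gamma>" .
  qed
qed

section \<open>The factor \<open>S\<close> and the monic orthogonal polynomials\<close>

lemma block_unitri_vanishing:
  assumes bu: "block_unitri D S"
    and h: "\<forall>\<beta>. length \<beta> = D \<and> sum_list \<beta> < k \<longrightarrow> (\<Sum>\<delta>\<in>lowset D (sum_list \<beta>). S \<beta> \<delta> * \<psi> \<delta>) = 0"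
  shows "\<forall>\<gamma>. length \<gamma> = D \<and> sum_list \<gamma> < k \<longrightarrow> \<psi> \<gamma> = 0"
proof -
  have "\<forall>\<gamma>. length \<gamma> = D \<and> sum_list \<gamma> = j \<and> j < k \<longrightarrow> \<psi> \<gamma> = 0" for j
  proof (induction j rule: less_induct)
    case (less j)
    show ?case
    proof (intro allI impI)
      fix \<gamma> assume g: "length \<gamma> = D \<and> sum_list \<gamma> = j \<and> j < k"
      have "0 = (\<Sum>\<delta>\<in>lowset D j. S \<gamma> \<delta> * \<psi> \<delta>)" using h g by auto
      also have "\<dots> = (\<Sum>\<delta>\<in>lowset D j. if \<delta> = \<gamma> then \<psi> \<gamma> else 0)"
      proof (rule sum.cong)
        fix \<delta> assume d: "\<delta> \<in> lowset D j"
        show "S \<gamma> \<delta> * \<psi> \<delta> = (if \<delta> = \<gamma> then \<psi> \<gamma> else 0)"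
        proof (cases "sum_list \<delta> < j")
          case True then show ?thesis using less.IH[of "sum_list \<delta>"] d g by (auto simp: lowset_def)
        next
          case False
          then have "sum_list \<delta> = j" using d by (simp add: lowset_def)
          then show ?thesis using bu d g unfolding block_unitri_def mi_def lowset_def by auto
        qed
      qed simp
      also have "\<dots> = \<psi> \<gamma>" using g finite_lowset by (simp add: lowset_def)
      finally show "\<psi> \<gamma> = 0" by simp
    qed
  qed
  then show ?thesis by blast
qed

lemma sgs_swap: "sgs D m S \<alpha> \<beta> = (\<Sum>\<delta>\<in>lowset D (sum_list \<beta>). S \<beta> \<delta> * (\<Sum>\<gamma>\<in>lowset D (sum_list \<alpha>). S \<alpha> \<gamma> * gm m \<gamma> \<delta>))"
  unfolding sgs_def by (subst sum.swap) (simp add: sum_distrib_left mult_ac)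

lemma sgs_sym: "sgs D m S \<alpha> \<beta> = sgs D m S \<beta> \<alpha>"
  unfolding sgs_def by (subst sum.swap) (simp add: gm_sym mult_ac)

definition monic_orth :: "nat \<Rightarrow> (nat list \<Rightarrow> complex) \<Rightarrow> nat list \<Rightarrow> (nat list \<Rightarrow> complex) \<Rightarrow> bool" where
  "monic_orth D m \<alpha> c \<longleftrightarrow> (\<forall>\<gamma>. (length \<gamma> \<noteq> D \<or> sum_list \<gamma> > sum_list \<alpha>) \<longrightarrow> c \<gamma> = 0)
     \<and> (\<forall>\<gamma>. length \<gamma> = D \<and> sum_list \<gamma> = sum_list \<alpha> \<longrightarrow> c \<gamma> = (if \<gamma> = \<alpha> then 1 else 0))
     \<and> (\<forall>\<gamma>. length \<gamma> = D \<and> sum_list \<gamma> < sum_list \<alpha> \<longrightarrow>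
          (\<Sum>\<delta>\<in>lowset D (sum_list \<alpha>). c \<delta> * gm m \<delta> \<gamma>) = 0)"

lemma ldl_monic_orth:
  assumes l: "ldl D m S" and a: "length \<alpha> = D"
  shows "monic_orth D m \<alpha> (S \<alpha>)"
proof -
  have bu: "block_unitri D S" using l by (simp add: ldl_def)
  let ?\<psi> = "\<lambda>\<gamma>. \<Sum>\<delta>\<in>lowset D (sum_list \<alpha>). S \<alpha> \<delta> * gm m \<delta> \<gamma>"
  have "\<forall>\<gamma>. length \<gamma> = D \<and> sum_list \<gamma> < sum_list \<alpha> \<longrightarrow> ?\<psi> \<gamma> = 0"
  proof (rule block_unitri_vanishing[OF bu], intro allI impI)
    fix \<beta> assume b: "length \<beta> = D \<and> sum_list \<beta> < sum_list \<alpha>"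
    have "sgs D m S \<alpha> \<beta> = 0" using l a b unfolding ldl_def mi_def by auto
    then show "(\<Sum>\<delta>\<in>lowset D (sum_list \<beta>). S \<beta> \<delta> * ?\<psi> \<delta>) = 0" by (simp add: sgs_swap)
  qed
  then show ?thesis using bu a unfolding monic_orth_def block_unitri_def mi_def by auto
qed

lemma monic_orth_eq_off_lowset_less:
  assumes c: "monic_orth D m \<alpha> c" and c': "monic_orth D m \<alpha> c'"
    and \<delta>: "\<delta> \<notin> lowset_less D (sum_list \<alpha>)"
  shows "c \<delta> = c' \<delta>"
proof (cases "length \<delta> = D \<and> sum_list \<delta> = sum_list \<alpha>")
  case True
  then show ?thesis using c c' unfolding monic_orth_def by simp
next
  case False
  then have "length \<delta> \<noteq> D \<or> sum_list \<delta> > sum_list \<alpha>" using \<delta> by (auto simp: lowset_less_def)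
  then show ?thesis using c c' unfolding monic_orth_def by simp
qed

lemma monic_orth_unique:
  assumes qd: "quasi_definite D m"
    and c: "monic_orth D m \<alpha> c" and c': "monic_orth D m \<alpha> c'"
  shows "c = c'"
proof -
  let ?k = "sum_list \<alpha>"
  define d where "d \<gamma> = c \<gamma> - c' \<gamma>" for \<gamma>
  have sub: "lowset_less D ?k \<subseteq> lowset D ?k" by (auto simp: lowset_less_def lowset_def)
  have "d = (\<lambda>_. 0)"
  proof (rule trunc_moments_nondegenerate[OF qd])
    show supp: "\<forall>\<delta>. \<delta> \<notin> lowset_less D ?k \<longrightarrow> d \<delta> = 0"
      using monic_orth_eq_off_lowset_less[OF c c'] by (simp add: d_def)
    show "\<forall>\<gamma>\<in>lowset_less D ?k. (\<Sum>\<delta>\<in>lowset_less D ?k. d \<delta> * gm m \<delta> \<gamma>) = 0"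
    proof
      fix \<gamma> assume g: "\<gamma> \<in> lowset_less D ?k"
      have "(\<Sum>\<delta>\<in>lowset_less D ?k. d \<delta> * gm m \<delta> \<gamma>) = (\<Sum>\<delta>\<in>lowset D ?k. d \<delta> * gm m \<delta> \<gamma>)"
        by (rule sum.mono_neutral_left[OF finite_lowset sub]) (use supp in auto)
      also have "\<dots> = (\<Sum>\<delta>\<in>lowset D ?k. c \<delta> * gm m \<delta> \<gamma>) - (\<Sum>\<delta>\<in>lowset D ?k. c' \<delta> * gm m \<delta> \<gamma>)"
        by (simp add: d_def left_diff_distrib sum_subtractf)
      also have "\<dots> = 0" using c c' g unfolding monic_orth_def lowset_less_def by auto
      finally show "(\<Sum>\<delta>\<in>lowset_less D ?k. d \<delta> * gm m \<delta> \<gamma>) = 0" .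
    qed
  qed
  then show ?thesis unfolding d_def fun_eq_iff by simp
qed

lemma monic_orth_exists:
  assumes qd: "quasi_definite D m" and a: "length \<alpha> = D"
  shows "\<exists>c. monic_orth D m \<alpha> c"
proof -
  let ?k = "sum_list \<alpha>"
  let ?e = "\<lambda>\<gamma>. if \<gamma> = \<alpha> then (1::complex) else 0"
  obtain w where w: "\<forall>\<delta>. \<delta> \<notin> lowset_less D ?k \<longrightarrow> w \<delta> = 0"
      "\<forall>\<gamma>\<in>lowset_less D ?k. (\<Sum>\<delta>\<in>lowset_less D ?k. w \<delta> * gm m \<delta> \<gamma>) = - gm m \<alpha> \<gamma>"
    using trunc_moments_solvable[OF qd, of ?k "\<lambda>\<gamma>. - gm m \<alpha> \<gamma>"] by auto
  define c where "c \<gamma> = ?e \<gamma> + w \<gamma>" for \<gamma>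
  have sub: "lowset_less D ?k \<subseteq> lowset D ?k" by (auto simp: lowset_less_def lowset_def)
  have aL: "\<alpha> \<in> lowset D ?k" using a by (simp add: lowset_def)
  have "monic_orth D m \<alpha> c"
    unfolding monic_orth_def
  proof (intro conjI allI impI)
    fix \<gamma> assume "length \<gamma> \<noteq> D \<or> sum_list \<alpha> < sum_list \<gamma>"
    then show "c \<gamma> = 0" using w a unfolding c_def lowset_less_def by auto
  next
    fix \<gamma> assume "length \<gamma> = D \<and> sum_list \<gamma> = sum_list \<alpha>"
    then show "c \<gamma> = (if \<gamma> = \<alpha> then 1 else 0)" using w unfolding c_def lowset_less_def by auto
  next
    fix \<gamma> assume g: "length \<gamma> = D \<and> sum_list \<gamma> < sum_list \<alpha>"
    have "(\<Sum>\<delta>\<in>lowset D ?k. c \<delta> * gm m \<delta> \<gamma>)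
        = (\<Sum>\<delta>\<in>lowset D ?k. ?e \<delta> * gm m \<delta> \<gamma>) + (\<Sum>\<delta>\<in>lowset D ?k. w \<delta> * gm m \<delta> \<gamma>)"
      by (simp add: c_def distrib_right sum.distrib)
    also have "(\<Sum>\<delta>\<in>lowset D ?k. ?e \<delta> * gm m \<delta> \<gamma>) = gm m \<alpha> \<gamma>"
    proof -
      have "(\<Sum>\<delta>\<in>lowset D ?k. ?e \<delta> * gm m \<delta> \<gamma>) = (\<Sum>\<delta>\<in>lowset D ?k. if \<delta> = \<alpha> then gm m \<delta> \<gamma> else 0)"
        by (rule sum.cong) auto
      also have "\<dots> = gm m \<alpha> \<gamma>" using aL finite_lowset by simp
      finally show ?thesis .
    qed
    also have "(\<Sum>\<delta>\<in>lowset D ?k. w \<delta> * gm m \<delta> \<gamma>) = (\<Sum>\<delta>\<in>lowset_less D ?k. w \<delta> * gm m \<delta> \<gamma>)"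
      by (rule sum.mono_neutral_right[OF finite_lowset sub]) (use w in auto)
    also have "\<dots> = - gm m \<alpha> \<gamma>" using w g by (auto simp: lowset_less_def)
    finally show "(\<Sum>\<delta>\<in>lowset D ?k. c \<delta> * gm m \<delta> \<gamma>) = 0" by simp
  qed
  then show ?thesis by blast
qed

lemma ldl_exists:
  assumes qd: "quasi_definite D m"
  shows "\<exists>S. ldl D m S"
proof -
  define S where "S \<alpha> = (if length \<alpha> = D then (SOME c. monic_orth D m \<alpha> c) else (\<lambda>_. 0))" for \<alpha>
  have P: "monic_orth D m \<alpha> (S \<alpha>)" if "length \<alpha> = D" for \<alpha>
    unfolding S_def using that monic_orth_exists[OF qd that] by (simp add: someI_ex)
  have bu: "block_unitri D S"
    unfolding block_unitri_def mi_def
  proof (intro allI conjI impI)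
    fix \<alpha> \<beta> :: "nat list" assume "\<not> (length \<alpha> = D \<and> length \<beta> = D)"
    then show "S \<alpha> \<beta> = 0" using P[of \<alpha>] unfolding monic_orth_def by (auto simp: S_def)
  next
    fix \<alpha> \<beta> :: "nat list" assume "length \<alpha> = D \<and> length \<beta> = D \<and> sum_list \<alpha> < sum_list \<beta>"
    then show "S \<alpha> \<beta> = 0" using P[of \<alpha>] unfolding monic_orth_def by auto
  next
    fix \<alpha> \<beta> :: "nat list" assume "length \<alpha> = D \<and> length \<beta> = D \<and> sum_list \<alpha> = sum_list \<beta>"
    then show "S \<alpha> \<beta> = (if \<alpha> = \<beta> then 1 else 0)" using P[of \<alpha>] unfolding monic_orth_def by auto
  qed
  have lower: "sgs D m S \<alpha> \<beta> = 0"
    if "length \<alpha> = D" and "length \<beta> = D" and "sum_list \<beta> < sum_list \<alpha>" for \<alpha> \<beta>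
    unfolding sgs_swap using that P[of \<alpha>]
    by (intro sum.neutral ballI) (auto simp: monic_orth_def lowset_def)
  have "sgs D m S \<alpha> \<beta> = 0"
    if "length \<alpha> = D" "length \<beta> = D" "sum_list \<alpha> \<noteq> sum_list \<beta>" for \<alpha> \<beta>
    using that lower[of \<alpha> \<beta>] lower[of \<beta> \<alpha>] sgs_sym[of D m S \<alpha> \<beta>] by (metis linorder_neqE_nat)
  with bu show ?thesis unfolding ldl_def mi_def by blast
qed

lemma ldl_unique:
  assumes qd: "quasi_definite D m" and l: "ldl D m S" and l': "ldl D m S'"
  shows "S = S'"
proof (intro ext)
  fix \<alpha> \<beta> :: "nat list"
  show "S \<alpha> \<beta> = S' \<alpha> \<beta>"
  proof (cases "length \<alpha> = D")
    case True
    then show ?thesis using monic_orth_unique[OF qd ldl_monic_orth[OF l True] ldl_monic_orth[OF l' True]] by simp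
  next
    case False
    then show ?thesis using l l' unfolding ldl_def block_unitri_def mi_def by auto
  qed
qed

lemma Sfac_ldl: "quasi_definite D m \<Longrightarrow> ldl D m (Sfac D m)"
  unfolding Sfac_def using ldl_exists ldl_unique by (metis theI)

lemma Sfac_monic_orth: "quasi_definite D m \<Longrightarrow> length \<alpha> = D \<Longrightarrow> monic_orth D m \<alpha> (Sfac D m \<alpha>)"
  using Sfac_ldl ldl_monic_orth by blast

lemma Sfac_eq_0: "quasi_definite D m \<Longrightarrow> \<gamma> \<notin> lowset D (sum_list \<alpha>) \<Longrightarrow> Sfac D m \<alpha> \<gamma> = 0"
proof -
  assume qd: "quasi_definite D m" and g: "\<gamma> \<notin> lowset D (sum_list \<alpha>)"
  show ?thesis
  proof (cases "length \<alpha> = D")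
    case True
    then show ?thesis using Sfac_monic_orth[OF qd True] g unfolding monic_orth_def lowset_def by auto
  next
    case False
    then show ?thesis using Sfac_ldl[OF qd] unfolding ldl_def block_unitri_def mi_def by auto
  qed
qed

lemma Sfac_diag: "quasi_definite D m \<Longrightarrow> length \<alpha> = D \<Longrightarrow> length \<gamma> = D \<Longrightarrow> sum_list \<gamma> = sum_list \<alpha> \<Longrightarrow>
   Sfac D m \<alpha> \<gamma> = (if \<gamma> = \<alpha> then 1 else 0)"
  using Sfac_monic_orth unfolding monic_orth_def by blast

lemma Sfac_mons: "quasi_definite D m \<Longrightarrow> a < length (mons D k) \<Longrightarrow> b < length (mons D k) \<Longrightarrow>
   Sfac D m (mons D k ! a) (mons D k ! b) = (if a = b then 1 else 0)"
  using Sfac_diag[of D m "mons D k ! a" "mons D k ! b"] mons_nth[of a D k] mons_nth[of b D k]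
    distinct_mons[of D k] nth_eq_iff_index_eq by auto

text \<open>A polynomial \<open>p = (\<Sum>\<gamma>\<in>L. a \<gamma> x\<^sup>\<gamma>)\<close> is encoded by its coefficient function \<open>a\<close>;
  then \<open>moment_mul L m a \<delta> = \<langle>u, p x\<^sup>\<delta>\<rangle>\<close> and \<open>poly_eval L x a = p(x)\<close>.\<close>
definition moment_mul :: "nat list set \<Rightarrow> (nat list \<Rightarrow> complex) \<Rightarrow> (nat list \<Rightarrow> complex) \<Rightarrow> nat list \<Rightarrow> complex" where
  "moment_mul L m a \<delta> = (\<Sum>\<gamma>\<in>L. a \<gamma> * gm m \<gamma> \<delta>)"

definition poly_eval :: "nat list set \<Rightarrow> complex list \<Rightarrow> (nat list \<Rightarrow> complex) \<Rightarrow> complex" where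
  "poly_eval L x a = (\<Sum>\<gamma>\<in>L. a \<gamma> * monval x \<gamma>)"

lemma moment_mul_sum: "moment_mul L m (\<lambda>\<gamma>. \<Sum>j\<in>J. F j \<gamma>) \<delta> = (\<Sum>j\<in>J. moment_mul L m (F j) \<delta>)"
  unfolding moment_mul_def by (rule sum_sum_mult)

lemma moment_mul_scale: "moment_mul L m (\<lambda>\<gamma>. c * a \<gamma>) \<delta> = c * moment_mul L m a \<delta>"
  unfolding moment_mul_def by (rule sum_scale_mult)

lemma moment_mul_diff: "moment_mul L m (\<lambda>\<gamma>. a \<gamma> - b \<gamma>) \<delta> = moment_mul L m a \<delta> - moment_mul L m b \<delta>"
  unfolding moment_mul_def by (rule sum_diff_mult)

lemma poly_eval_sum: "poly_eval L x (\<lambda>\<gamma>. \<Sum>j\<in>J. F j \<gamma>) = (\<Sum>j\<in>J. poly_eval L x (F j))"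
  unfolding poly_eval_def by (rule sum_sum_mult)

lemma poly_eval_scale: "poly_eval L x (\<lambda>\<gamma>. c * a \<gamma>) = c * poly_eval L x a"
  unfolding poly_eval_def by (rule sum_scale_mult)

lemma poly_eval_diff: "poly_eval L x (\<lambda>\<gamma>. a \<gamma> - b \<gamma>) = poly_eval L x a - poly_eval L x b"
  unfolding poly_eval_def by (rule sum_diff_mult)

lemma moment_mul_pairing_sym: "(\<Sum>\<delta>\<in>L. b \<delta> * moment_mul L m a \<delta>) = (\<Sum>\<delta>\<in>L. a \<delta> * moment_mul L m b \<delta>)"
  unfolding moment_mul_def by (simp add: sum_distrib_left) (subst sum.swap, simp add: gm_sym mult_ac)

lemma moment_mul_dirac_pert:
  assumes pts: "\<forall>i<q. length (pts i) = D" and L: "\<forall>\<gamma>\<in>L. length \<gamma> = D" and d: "length \<delta> = D"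
  shows "moment_mul L (dirac_pert m q \<xi> pts) a \<delta> = moment_mul L m a \<delta> +
     (\<Sum>i<q. \<xi> i * poly_eval L (map of_real (pts i)) a * monval (map of_real (pts i)) \<delta>)"
proof -
  have "moment_mul L (dirac_pert m q \<xi> pts) a \<delta> = (\<Sum>\<gamma>\<in>L. a \<gamma> * gm m \<gamma> \<delta> +
     (\<Sum>i<q. a \<gamma> * (\<xi> i * monval (map of_real (pts i)) \<gamma> * monval (map of_real (pts i)) \<delta>)))"
    unfolding moment_mul_def
  proof (rule sum.cong[OF refl])
    fix \<gamma> assume "\<gamma> \<in> L"
    then have "length \<gamma> = D" using L by auto
    from gm_dirac_pert[OF pts this d] show "a \<gamma> * gm (dirac_pert m q \<xi> pts) \<gamma> \<delta> = a \<gamma> * gm m \<gamma> \<delta> +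
     (\<Sum>i<q. a \<gamma> * (\<xi> i * monval (map of_real (pts i)) \<gamma> * monval (map of_real (pts i)) \<delta>))"
      by (simp add: distrib_left sum_distrib_left)
  qed
  also have "\<dots> = moment_mul L m a \<delta> + (\<Sum>i<q. \<Sum>\<gamma>\<in>L. a \<gamma> * (\<xi> i * monval (map of_real (pts i)) \<gamma> * monval (map of_real (pts i)) \<delta>))"
    unfolding moment_mul_def by (simp add: sum.distrib) (rule sum.swap)
  also have "\<dots> = moment_mul L m a \<delta> + (\<Sum>i<q. \<xi> i * poly_eval L (map of_real (pts i)) a * monval (map of_real (pts i)) \<delta>)"
    unfolding poly_eval_def by (simp add: sum_distrib_left sum_distrib_right mult_ac)
  finally show ?thesis .
qed

lemma moment_pairing_dirac_pert:
  assumes pts: "\<forall>i<q. length (pts i) = D" and L: "\<forall>\<gamma>\<in>L. length \<gamma> = D"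
  shows "(\<Sum>\<delta>\<in>L. s \<delta> * moment_mul L (dirac_pert m q \<xi> pts) a \<delta>) =
     (\<Sum>\<delta>\<in>L. s \<delta> * moment_mul L m a \<delta>)
     + (\<Sum>i<q. \<xi> i * poly_eval L (map of_real (pts i)) a * poly_eval L (map of_real (pts i)) s)"
proof -
  let ?x = "\<lambda>i. map (of_real :: real \<Rightarrow> complex) (pts i)"
  have "(\<Sum>\<delta>\<in>L. s \<delta> * moment_mul L (dirac_pert m q \<xi> pts) a \<delta>) =
     (\<Sum>\<delta>\<in>L. s \<delta> * moment_mul L m a \<delta> + s \<delta> * (\<Sum>i<q. (\<xi> i * poly_eval L (?x i) a) * monval (?x i) \<delta>))"
  proof (rule sum.cong[OF refl])
    fix \<delta> assume "\<delta> \<in> L"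
    then have "moment_mul L (dirac_pert m q \<xi> pts) a \<delta>
        = moment_mul L m a \<delta> + (\<Sum>i<q. (\<xi> i * poly_eval L (?x i) a) * monval (?x i) \<delta>)"
      using moment_mul_dirac_pert[OF pts L, of \<delta> m \<xi> a] L by simp
    then show "s \<delta> * moment_mul L (dirac_pert m q \<xi> pts) a \<delta>
        = s \<delta> * moment_mul L m a \<delta> + s \<delta> * (\<Sum>i<q. (\<xi> i * poly_eval L (?x i) a) * monval (?x i) \<delta>)"
      by (simp only: distrib_left)
  qed
  also have "\<dots> = (\<Sum>\<delta>\<in>L. s \<delta> * moment_mul L m a \<delta>)
      + (\<Sum>i<q. (\<xi> i * poly_eval L (?x i) a) * (\<Sum>\<delta>\<in>L. s \<delta> * monval (?x i) \<delta>))"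
    unfolding sum.distrib by (rule arg_cong2[where f = "(+)"], rule refl, rule sum_mult_sum_scale)
  also have "\<dots> = (\<Sum>\<delta>\<in>L. s \<delta> * moment_mul L m a \<delta>)
      + (\<Sum>i<q. \<xi> i * poly_eval L (?x i) a * poly_eval L (?x i) s)"
    unfolding poly_eval_def ..
  finally show ?thesis .
qed

lemma sgs_eq_moment_pairing:
  assumes qd: "quasi_definite D m" and "sum_list \<alpha> \<le> n" "sum_list \<beta> \<le> n"
  shows "sgs D m (Sfac D m) \<alpha> \<beta> = (\<Sum>\<delta>\<in>lowset D n. Sfac D m \<beta> \<delta> * moment_mul (lowset D n) m (Sfac D m \<alpha>) \<delta>)"
proof -
  have sa: "lowset D (sum_list \<alpha>) \<subseteq> lowset D n" "lowset D (sum_list \<beta>) \<subseteq> lowset D n"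
    using assms by (auto simp: lowset_def)
  have "sgs D m (Sfac D m) \<alpha> \<beta> = (\<Sum>\<delta>\<in>lowset D (sum_list \<beta>). Sfac D m \<beta> \<delta> * moment_mul (lowset D n) m (Sfac D m \<alpha>) \<delta>)"
    unfolding sgs_swap moment_mul_def
    by (rule sum.cong[OF refl], rule arg_cong[where f = "\<lambda>t. _ * t"], rule sum.mono_neutral_left[OF finite_lowset sa(1)])
       (use Sfac_eq_0[OF qd] in auto)
  also have "\<dots> = (\<Sum>\<delta>\<in>lowset D n. Sfac D m \<beta> \<delta> * moment_mul (lowset D n) m (Sfac D m \<alpha>) \<delta>)"
    by (rule sum.mono_neutral_left[OF finite_lowset sa(2)]) (use Sfac_eq_0[OF qd] in auto)
  finally show ?thesis .
qed

lemma eq_0_if_orth_to_Sfac_rows: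
  assumes qd: "quasi_definite D m" and N: "N \<le> n + 1"
    and supp: "\<forall>\<gamma>. \<gamma> \<notin> lowset_less D N \<longrightarrow> g \<gamma> = 0"
    and h: "\<forall>\<beta>. length \<beta> = D \<and> sum_list \<beta> < N \<longrightarrow>
              (\<Sum>\<delta>\<in>lowset D n. Sfac D m \<beta> \<delta> * moment_mul (lowset D n) m g \<delta>) = 0"
  shows "g = (\<lambda>_. 0)"
proof -
  let ?L = "lowset D n" let ?S = "Sfac D m"
  have bu: "block_unitri D ?S" using Sfac_ldl[OF qd] by (simp add: ldl_def)
  have ltL: "lowset_less D N \<subseteq> ?L" using N by (auto simp: lowset_less_def lowset_def)
  have "\<forall>\<gamma>. length \<gamma> = D \<and> sum_list \<gamma> < N \<longrightarrow> moment_mul ?L m g \<gamma> = 0"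
  proof (rule block_unitri_vanishing[OF bu], intro allI impI)
    fix \<beta> assume b: "length \<beta> = D \<and> sum_list \<beta> < N"
    have sub: "lowset D (sum_list \<beta>) \<subseteq> ?L" using b N by (auto simp: lowset_def)
    have "(\<Sum>\<delta>\<in>lowset D (sum_list \<beta>). ?S \<beta> \<delta> * moment_mul ?L m g \<delta>) = (\<Sum>\<delta>\<in>?L. ?S \<beta> \<delta> * moment_mul ?L m g \<delta>)"
      by (rule sum.mono_neutral_left[OF finite_lowset sub]) (use Sfac_eq_0[OF qd] in auto)
    then show "(\<Sum>\<delta>\<in>lowset D (sum_list \<beta>). ?S \<beta> \<delta> * moment_mul ?L m g \<delta>) = 0" using h b by simp
  qed
  moreover have "moment_mul ?L m g \<gamma> = (\<Sum>\<delta>\<in>lowset_less D N. g \<delta> * gm m \<delta> \<gamma>)" for \<gamma>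
    unfolding moment_mul_def by (rule sum.mono_neutral_right[OF finite_lowset ltL]) (use supp in auto)
  ultimately show ?thesis using trunc_moments_nondegenerate[OF qd supp] by (auto simp: lowset_less_def)
qed

lemma Sfac_orth_lower:
  assumes qd: "quasi_definite D m" and a: "length \<alpha> = D" "sum_list \<alpha> = n"
    and h: "\<forall>\<gamma>. \<gamma> \<notin> lowset_less D n \<longrightarrow> h \<gamma> = 0"
  shows "(\<Sum>\<delta>\<in>lowset D n. h \<delta> * moment_mul (lowset D n) m (Sfac D m \<alpha>) \<delta>) = 0"
proof (rule sum.neutral, rule ballI)
  fix \<delta> assume d: "\<delta> \<in> lowset D n"
  show "h \<delta> * moment_mul (lowset D n) m (Sfac D m \<alpha>) \<delta> = 0"
  proof (cases "\<delta> \<in> lowset_less D n")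
    case True
    then have "moment_mul (lowset D n) m (Sfac D m \<alpha>) \<delta> = 0"
      using Sfac_monic_orth[OF qd a(1)] a unfolding monic_orth_def moment_mul_def lowset_less_def by auto
    then show ?thesis by simp
  next
    case False then show ?thesis using h by simp
  qed
qed

lemma Sfac_diff_lower:
  assumes qd: "quasi_definite D m" and qd': "quasi_definite D m'" and a: "length \<alpha> = D" "sum_list \<alpha> = n"
  shows "\<forall>\<gamma>. \<gamma> \<notin> lowset_less D n \<longrightarrow> Sfac D m' \<alpha> \<gamma> - Sfac D m \<alpha> \<gamma> = 0"
proof (intro allI impI)
  fix \<gamma> assume g: "\<gamma> \<notin> lowset_less D n"
  show "Sfac D m' \<alpha> \<gamma> - Sfac D m \<alpha> \<gamma> = 0"
  proof (cases "length \<gamma> = D \<and> sum_list \<gamma> = n")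
    case True then show ?thesis using Sfac_diag[OF qd a(1)] Sfac_diag[OF qd' a(1)] a by simp
  next
    case False
    then have "\<gamma> \<notin> lowset D (sum_list \<alpha>)" using g a by (auto simp: lowset_less_def lowset_def)
    then show ?thesis using Sfac_eq_0[OF qd] Sfac_eq_0[OF qd'] by simp
  qed
qed

lemma Hblk_carrier: "Hblk D m k \<in> carrier_mat (length (mons D k)) (length (mons D k))"
  unfolding Hblk_def Let_def by auto

lemma Hblk_entry: "a < length (mons D k) \<Longrightarrow> b < length (mons D k) \<Longrightarrow>
   Hblk D m k $$ (a,b) = sgs D m (Sfac D m) (mons D k ! a) (mons D k ! b)"
  unfolding Hblk_def Let_def by auto

lemma Hblk_kernel_sgs_eq_0:
  assumes qd: "quasi_definite D m" and v: "v \<in> carrier_vec (length (mons D k))"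
    and Hv: "Hblk D m k *\<^sub>v v = 0\<^sub>v (length (mons D k))"
    and \<beta>: "length \<beta> = D" "sum_list \<beta> \<le> k"
  shows "(\<Sum>a<length (mons D k). v $ a * sgs D m (Sfac D m) (mons D k ! a) \<beta>) = 0"
proof (cases "sum_list \<beta> = k")
  case True
  then have "\<beta> \<in> set (mons D k)" using \<beta> set_mons by blast
  then obtain e where e: "e < length (mons D k)" "\<beta> = mons D k ! e" by (metis in_set_conv_nth)
  have "(\<Sum>a<length (mons D k). v $ a * sgs D m (Sfac D m) (mons D k ! a) \<beta>) = (Hblk D m k *\<^sub>v v) $ e"
    using e v Hblk_carrier[of D m k]
    by (auto simp: Hblk_entry sgs_sym mult.commute scalar_prod_def lessThan_atLeast0 intro!: sum.cong)
  then show ?thesis using Hv e by simp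
next
  case False
  then have "sgs D m (Sfac D m) (mons D k ! a) \<beta> = 0" if "a < length (mons D k)" for a
    using Sfac_ldl[OF qd] mons_nth[OF that] \<beta> unfolding ldl_def mi_def by auto
  then show ?thesis by simp
qed

lemma Hblk_det:
  assumes qd: "quasi_definite D m"
  shows "det (Hblk D m k) \<noteq> 0"
proof (rule det_nonzero_if_kernel_trivial[OF Hblk_carrier])
  let ?I = "mons D k" let ?r = "length (mons D k)" let ?S = "Sfac D m" let ?L = "lowset D k"
  fix v :: "complex vec" assume v: "v \<in> carrier_vec ?r" and Hv: "Hblk D m k *\<^sub>v v = 0\<^sub>v ?r"
  define g where "g \<gamma> = (\<Sum>a<?r. v $ a * ?S (?I ! a) \<gamma>)" for \<gamma>
  have "g = (\<lambda>_. 0)"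
  proof (rule eq_0_if_orth_to_Sfac_rows[OF qd, of "k+1" k])
    show "\<forall>\<gamma>. \<gamma> \<notin> lowset_less D (k+1) \<longrightarrow> g \<gamma> = 0"
    proof (intro allI impI)
      fix \<gamma> assume "\<gamma> \<notin> lowset_less D (k+1)"
      then have "\<gamma> \<notin> lowset D (sum_list (?I ! a))" if "a < ?r" for a
        using mons_nth[OF that] by (auto simp: lowset_less_def lowset_def)
      then show "g \<gamma> = 0" unfolding g_def using Sfac_eq_0[OF qd] by (auto intro!: sum.neutral)
    qed
    show "\<forall>\<beta>. length \<beta> = D \<and> sum_list \<beta> < k + 1 \<longrightarrow> (\<Sum>\<delta>\<in>?L. ?S \<beta> \<delta> * moment_mul ?L m g \<delta>) = 0"
    proof (intro allI impI)
      fix \<beta> assume \<beta>: "length \<beta> = D \<and> sum_list \<beta> < k + 1"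
      have "(\<Sum>\<delta>\<in>?L. ?S \<beta> \<delta> * moment_mul ?L m g \<delta>)
          = (\<Sum>a<?r. v $ a * (\<Sum>\<delta>\<in>?L. ?S \<beta> \<delta> * moment_mul ?L m (?S (?I ! a)) \<delta>))"
        unfolding g_def moment_mul_sum moment_mul_scale by (simp add: sum_distrib_left mult_ac) (rule sum.swap)
      also have "\<dots> = (\<Sum>a<?r. v $ a * sgs D m ?S (?I ! a) \<beta>)"
        using sgs_eq_moment_pairing[OF qd, of "?I ! _" k \<beta>] mons_nth \<beta> by simp
      also have "\<dots> = 0" using Hblk_kernel_sgs_eq_0[OF qd v Hv] \<beta> by simp
      finally show "(\<Sum>\<delta>\<in>?L. ?S \<beta> \<delta> * moment_mul ?L m g \<delta>) = 0" .
    qed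
  qed auto
  then have "v $ e = 0" if e: "e < ?r" for e
  proof -
    have "0 = g (?I ! e)" using \<open>g = _\<close> by simp
    also have "\<dots> = (\<Sum>a<?r. if a = e then v $ e else 0)"
      unfolding g_def by (rule sum.cong) (use e Sfac_mons[OF qd] in auto)
    also have "\<dots> = v $ e" using e by simp
    finally show ?thesis by simp
  qed
  then show "v = 0\<^sub>v ?r" using v by auto
qed

lemma Hblk_inv:
  assumes qd: "quasi_definite D m"
  shows "minv (Hblk D m k) \<in> carrier_mat (length (mons D k)) (length (mons D k)) \<and>
     Hblk D m k * minv (Hblk D m k) = 1\<^sub>m (length (mons D k)) \<and>
     minv (Hblk D m k) * Hblk D m k = 1\<^sub>m (length (mons D k))"
  by (rule minv_inverse[OF Hblk_carrier Hblk_det[OF qd]])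

lemma Pvec_carrier: "Pvec D m k x \<in> carrier_mat (length (mons D k)) 1"
  unfolding Pvec_def Let_def by auto

lemma Pvec_entry:
  assumes qd: "quasi_definite D m" and k: "k \<le> n" and a: "a < length (mons D k)"
  shows "Pvec D m k x $$ (a,0) = poly_eval (lowset D n) x (Sfac D m (mons D k ! a))"
proof -
  have sub: "lowset D k \<subseteq> lowset D n" using k by (auto simp: lowset_def)
  have "Pvec D m k x $$ (a,0) = (\<Sum>\<gamma>\<in>lowset D k. Sfac D m (mons D k ! a) \<gamma> * monval x \<gamma>)"
    unfolding Pvec_def Let_def using a by simp
  also have "\<dots> = poly_eval (lowset D n) x (Sfac D m (mons D k ! a))"
    unfolding poly_eval_def by (rule sum.mono_neutral_left[OF finite_lowset sub]) (use Sfac_eq_0[OF qd] mons_nth[OF a] in auto)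
  finally show ?thesis .
qed

section \<open>The reproducing kernel\<close>

definition kernel_coeffs :: "nat \<Rightarrow> (nat list \<Rightarrow> complex) \<Rightarrow> nat \<Rightarrow> complex list \<Rightarrow> nat list \<Rightarrow> complex" where
  "kernel_coeffs D m n x \<gamma> = (\<Sum>k<n. \<Sum>a<length (mons D k). \<Sum>b<length (mons D k).
      minv (Hblk D m k) $$ (a,b) * poly_eval (lowset D n) x (Sfac D m (mons D k ! b)) * Sfac D m (mons D k ! a) \<gamma>)"

lemma kernel_eq_poly_eval:
  assumes qd: "quasi_definite D m"
  shows "kernel D m n y x = poly_eval (lowset D n) y (kernel_coeffs D m n x)"
proof -
  have "(transpose_mat (Pvec D m k y) * minv (Hblk D m k) * Pvec D m k x) $$ (0,0) =
     (\<Sum>a<length (mons D k). \<Sum>b<length (mons D k). minv (Hblk D m k) $$ (a,b)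
        * poly_eval (lowset D n) x (Sfac D m (mons D k ! b)) * poly_eval (lowset D n) y (Sfac D m (mons D k ! a)))"
    if "k < n" for k
    using transpose_mult_mult_entry[OF Pvec_carrier _ Pvec_carrier] Hblk_inv[OF qd, of k]
      Pvec_entry[OF qd, of k n] that by simp
  then show ?thesis
    unfolding kernel_def kernel_coeffs_def poly_eval_sum poly_eval_scale by simp
qed

lemma kernel_coeffs_eq_0:
  assumes qd: "quasi_definite D m" and g: "\<gamma> \<notin> lowset_less D n"
  shows "kernel_coeffs D m n x \<gamma> = 0"
proof -
  have "Sfac D m (mons D k ! a) \<gamma> = 0" if "k < n" "a < length (mons D k)" for k a
    using Sfac_eq_0[OF qd] mons_nth[OF that(2)] g that(1) by (auto simp: lowset_less_def lowset_def)
  then show ?thesis unfolding kernel_coeffs_def by simp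
qed

lemma minv_Hblk_mult_sgs:
  assumes qd: "quasi_definite D m" and a: "a < length (mons D k)" and e: "e < length (mons D k)"
  shows "(\<Sum>b<length (mons D k). minv (Hblk D m k) $$ (a,b) * sgs D m (Sfac D m) (mons D k ! b) (mons D k ! e))
    = (if a = e then 1 else 0)"
proof -
  have Hi: "minv (Hblk D m k) \<in> carrier_mat (length (mons D k)) (length (mons D k))"
    "minv (Hblk D m k) * Hblk D m k = 1\<^sub>m (length (mons D k))"
    using Hblk_inv[OF qd] by blast+
  have "(\<Sum>b<length (mons D k). minv (Hblk D m k) $$ (a,b) * sgs D m (Sfac D m) (mons D k ! b) (mons D k ! e))
      = (minv (Hblk D m k) * Hblk D m k) $$ (a,e)"
    using index_mult_mat_sum[OF Hi(1) Hblk_carrier a e] e by (auto simp: Hblk_entry intro!: sum.cong)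
  then show ?thesis using Hi(2) a e by simp
qed

text \<open>The orthogonal projection onto polynomials of degree \<open>< n\<close>, expanded in the basis \<open>P\<^sub>k\<close>
  with coefficients \<open>H\<^sub>k\<^sup>-\<^sup>1 \<langle>u, P\<^sub>k f\<rangle>\<close>.\<close>
definition kernel_proj :: "nat \<Rightarrow> (nat list \<Rightarrow> complex) \<Rightarrow> nat \<Rightarrow> (nat list \<Rightarrow> complex) \<Rightarrow> nat list \<Rightarrow> complex" where
  "kernel_proj D m n f \<gamma> = (\<Sum>k<n. \<Sum>a<length (mons D k). \<Sum>b<length (mons D k).
      (\<Sum>\<delta>\<in>lowset D n. Sfac D m (mons D k ! a) \<delta> * moment_mul (lowset D n) m f \<delta>)
      * minv (Hblk D m k) $$ (a,b) * Sfac D m (mons D k ! b) \<gamma>)"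

lemma sum_minv_Hblk_sgs_collapse:
  assumes qd: "quasi_definite D m" and j: "j < n" and e: "e < length (mons D j)"
  shows "(\<Sum>k<n. \<Sum>a<length (mons D k). \<Sum>b<length (mons D k).
      c k a * minv (Hblk D m k) $$ (a,b) * sgs D m (Sfac D m) (mons D k ! b) (mons D j ! e)) = c j e"
proof -
  let ?S = "Sfac D m" let ?I = "\<lambda>k. mons D k" let ?r = "\<lambda>k. length (mons D k)"
  let ?Hi = "\<lambda>k. minv (Hblk D m k)" let ?\<beta> = "mons D j ! e"
  have \<beta>: "length ?\<beta> = D" "sum_list ?\<beta> = j" using mons_nth[OF e] by auto
  have "(\<Sum>k<n. \<Sum>a<?r k. \<Sum>b<?r k. c k a * ?Hi k $$ (a,b) * sgs D m ?S (?I k ! b) ?\<beta>)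
      = (\<Sum>a<?r j. \<Sum>b<?r j. c j a * ?Hi j $$ (a,b) * sgs D m ?S (?I j ! b) ?\<beta>)"
  proof (rule sum_eq_single)
    fix k assume k: "k \<in> {..<n}" "k \<noteq> j"
    have "sgs D m ?S (?I k ! b) ?\<beta> = 0" if "b < ?r k" for b
      using Sfac_ldl[OF qd] mons_nth[OF that] \<beta> k unfolding ldl_def mi_def by auto
    then show "(\<Sum>a<?r k. \<Sum>b<?r k. c k a * ?Hi k $$ (a,b) * sgs D m ?S (?I k ! b) ?\<beta>) = 0" by simp
  qed (use j in simp_all)
  also have "\<dots> = (\<Sum>a<?r j. if a = e then c j a else 0)"
  proof (rule sum.cong[OF refl])
    fix a assume "a \<in> {..<?r j}"
    then have "(\<Sum>b<?r j. ?Hi j $$ (a,b) * sgs D m ?S (?I j ! b) ?\<beta>) = (if a = e then 1 else 0)"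
      using minv_Hblk_mult_sgs[OF qd _ e] by simp
    moreover have "(\<Sum>b<?r j. c j a * ?Hi j $$ (a,b) * sgs D m ?S (?I j ! b) ?\<beta>)
        = c j a * (\<Sum>b<?r j. ?Hi j $$ (a,b) * sgs D m ?S (?I j ! b) ?\<beta>)"
      by (simp add: sum_distrib_left mult.assoc)
    ultimately show "(\<Sum>b<?r j. c j a * ?Hi j $$ (a,b) * sgs D m ?S (?I j ! b) ?\<beta>)
        = (if a = e then c j a else 0)"
      by simp
  qed
  also have "\<dots> = c j e" using e by simp
  finally show ?thesis .
qed

lemma kernel_proj_orth:
  assumes qd: "quasi_definite D m" and \<beta>: "length \<beta> = D" "sum_list \<beta> < n"
  shows "(\<Sum>\<delta>\<in>lowset D n. Sfac D m \<beta> \<delta> * moment_mul (lowset D n) m (kernel_proj D m n f) \<delta>)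
       = (\<Sum>\<delta>\<in>lowset D n. Sfac D m \<beta> \<delta> * moment_mul (lowset D n) m f \<delta>)"
proof -
  let ?L = "lowset D n" let ?S = "Sfac D m" let ?I = "\<lambda>k. mons D k" let ?r = "\<lambda>k. length (mons D k)"
  let ?Hi = "\<lambda>k. minv (Hblk D m k)" let ?j = "sum_list \<beta>"
  define c where "c k a = (\<Sum>\<delta>\<in>?L. ?S (?I k ! a) \<delta> * moment_mul ?L m f \<delta>)" for k a
  have "\<beta> \<in> set (?I ?j)" using \<beta> set_mons by blast
  then obtain e where e: "e < ?r ?j" "\<beta> = ?I ?j ! e" by (metis in_set_conv_nth)
  have "(\<Sum>\<delta>\<in>?L. ?S \<beta> \<delta> * moment_mul ?L m (kernel_proj D m n f) \<delta>)
      = (\<Sum>\<delta>\<in>?L. kernel_proj D m n f \<delta> * moment_mul ?L m (?S \<beta>) \<delta>)"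
    by (rule moment_mul_pairing_sym)
  also have "\<dots> = (\<Sum>k<n. \<Sum>a<?r k. \<Sum>b<?r k.
      c k a * ?Hi k $$ (a,b) * (\<Sum>\<delta>\<in>?L. ?S (?I k ! b) \<delta> * moment_mul ?L m (?S \<beta>) \<delta>))"
    unfolding kernel_proj_def sum_sum_mult sum_scale_mult c_def by (rule refl)
  also have "\<dots> = (\<Sum>k<n. \<Sum>a<?r k. \<Sum>b<?r k. c k a * ?Hi k $$ (a,b) * sgs D m ?S (?I k ! b) \<beta>)"
  proof (intro sum.cong refl)
    fix k b assume k: "k \<in> {..<n}" and b: "b \<in> {..<?r k}"
    have "sgs D m ?S \<beta> (?I k ! b) = (\<Sum>\<delta>\<in>?L. ?S (?I k ! b) \<delta> * moment_mul ?L m (?S \<beta>) \<delta>)"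
      by (rule sgs_eq_moment_pairing[OF qd]) (use \<beta> k mons_nth[of b D k] b in auto)
    then show "c k a * ?Hi k $$ (a,b) * (\<Sum>\<delta>\<in>?L. ?S (?I k ! b) \<delta> * moment_mul ?L m (?S \<beta>) \<delta>) =
       c k a * ?Hi k $$ (a,b) * sgs D m ?S (?I k ! b) \<beta>" for a
      using sgs_sym[of D m ?S \<beta> "?I k ! b"] by simp
  qed
  also have "\<dots> = c ?j e"
    using sum_minv_Hblk_sgs_collapse[OF qd \<beta>(2) e(1), of c] unfolding e(2)[symmetric] .
  finally show ?thesis unfolding c_def e(2)[symmetric] .
qed

lemma kernel_proj_eq:
  assumes qd: "quasi_definite D m"
    and f: "\<forall>\<gamma>. \<gamma> \<notin> lowset_less D n \<longrightarrow> f \<gamma> = 0"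
  shows "kernel_proj D m n f = f"
proof -
  define g where "g \<gamma> = f \<gamma> - kernel_proj D m n f \<gamma>" for \<gamma>
  have "g = (\<lambda>_. 0)"
  proof (rule eq_0_if_orth_to_Sfac_rows[OF qd, of n n])
    show "\<forall>\<gamma>. \<gamma> \<notin> lowset_less D n \<longrightarrow> g \<gamma> = 0"
    proof (intro allI impI)
      fix \<gamma> assume \<gamma>: "\<gamma> \<notin> lowset_less D n"
      have "Sfac D m (mons D k ! b) \<gamma> = 0" if "k < n" "b < length (mons D k)" for k b
        using Sfac_eq_0[OF qd] mons_nth[OF that(2)] \<gamma> that(1) by (auto simp: lowset_less_def lowset_def)
      then show "g \<gamma> = 0" unfolding g_def kernel_proj_def using f \<gamma> by simp
    qed
    show "\<forall>\<beta>. length \<beta> = D \<and> sum_list \<beta> < n \<longrightarrow>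
        (\<Sum>\<delta>\<in>lowset D n. Sfac D m \<beta> \<delta> * moment_mul (lowset D n) m g \<delta>) = 0"
      using kernel_proj_orth[OF qd] unfolding g_def moment_mul_diff by (simp add: right_diff_distrib sum_subtractf)
  qed simp
  then show ?thesis unfolding g_def fun_eq_iff by simp
qed

lemma kernel_coeffs_pairing:
  "(\<Sum>\<delta>\<in>lowset D n. kernel_coeffs D m n x \<delta> * moment_mul (lowset D n) m f \<delta>)
     = poly_eval (lowset D n) x (kernel_proj D m n f)"
proof -
  let ?L = "lowset D n" let ?S = "Sfac D m" let ?r = "\<lambda>k. length (mons D k)"
  have "(\<Sum>\<delta>\<in>?L. kernel_coeffs D m n x \<delta> * moment_mul ?L m f \<delta>) = (\<Sum>k<n. \<Sum>a<?r k. \<Sum>b<?r k.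
      minv (Hblk D m k) $$ (a,b) * poly_eval ?L x (?S (mons D k ! b)) * (\<Sum>\<delta>\<in>?L. ?S (mons D k ! a) \<delta> * moment_mul ?L m f \<delta>))"
    unfolding kernel_coeffs_def sum_sum_mult sum_scale_mult by (rule refl)
  also have "\<dots> = (\<Sum>k<n. \<Sum>a<?r k. \<Sum>b<?r k.
      (\<Sum>\<delta>\<in>?L. ?S (mons D k ! a) \<delta> * moment_mul ?L m f \<delta>) * minv (Hblk D m k) $$ (a,b) * poly_eval ?L x (?S (mons D k ! b)))"
    by (intro sum.cong refl) (rule mult.commute[THEN trans], rule mult.assoc[symmetric])
  also have "\<dots> = poly_eval ?L x (kernel_proj D m n f)"
    unfolding kernel_proj_def poly_eval_sum poly_eval_scale by (rule refl)
  finally show ?thesis .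
qed

lemma kernel_reproducing:
  assumes "quasi_definite D m" and "\<forall>\<gamma>. \<gamma> \<notin> lowset_less D n \<longrightarrow> f \<gamma> = 0"
  shows "(\<Sum>\<delta>\<in>lowset D n. kernel_coeffs D m n x \<delta> * moment_mul (lowset D n) m f \<delta>) = poly_eval (lowset D n) x f"
  unfolding kernel_coeffs_pairing kernel_proj_eq[OF assms] ..

section \<open>Christoffel-type formulas for the Dirac perturbation\<close>

context
  fixes D q n :: nat and m :: "nat list \<Rightarrow> complex" and \<xi> :: "nat \<Rightarrow> complex" and pts :: "nat \<Rightarrow> real list"
  assumes qd: "quasi_definite D m" and qd_pert: "quasi_definite D (dirac_pert m q \<xi> pts)"
    and len_pts: "\<forall>i<q. length (pts i) = D"
begin

abbreviation "m_pert \<equiv> dirac_pert m q \<xi> pts"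
abbreviation "Ln \<equiv> lowset D n"
abbreviation "pt i \<equiv> map (of_real :: real \<Rightarrow> complex) (pts i)"

lemma moment_pairing_pert:
  "(\<Sum>\<delta>\<in>Ln. s \<delta> * moment_mul Ln m_pert a \<delta>) =
   (\<Sum>\<delta>\<in>Ln. s \<delta> * moment_mul Ln m a \<delta>) + (\<Sum>i<q. \<xi> i * poly_eval Ln (pt i) a * poly_eval Ln (pt i) s)"
  by (rule moment_pairing_dirac_pert[OF len_pts]) (simp add: lowset_def)

lemma Sfac_pert_poly_eval:
  assumes \<alpha>: "length \<alpha> = D" "sum_list \<alpha> = n"
  shows "poly_eval Ln x (Sfac D m_pert \<alpha>) = poly_eval Ln x (Sfac D m \<alpha>) -
     (\<Sum>i<q. \<xi> i * poly_eval Ln (pt i) (Sfac D m_pert \<alpha>) * kernel D m n (pt i) x)"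
proof -
  let ?Q = "Sfac D m_pert \<alpha>" let ?P = "Sfac D m \<alpha>" let ?k = "kernel_coeffs D m n x"
  have k: "\<forall>\<gamma>. \<gamma> \<notin> lowset_less D n \<longrightarrow> ?k \<gamma> = 0" using kernel_coeffs_eq_0[OF qd] by blast
  have "poly_eval Ln x ?Q - poly_eval Ln x ?P = poly_eval Ln x (\<lambda>\<gamma>. ?Q \<gamma> - ?P \<gamma>)"
    by (rule poly_eval_diff[symmetric])
  also have "\<dots> = (\<Sum>\<delta>\<in>Ln. ?k \<delta> * moment_mul Ln m (\<lambda>\<gamma>. ?Q \<gamma> - ?P \<gamma>) \<delta>)"
    by (rule kernel_reproducing[OF qd Sfac_diff_lower[OF qd qd_pert \<alpha>], symmetric])
  also have "\<dots> = (\<Sum>\<delta>\<in>Ln. ?k \<delta> * moment_mul Ln m ?Q \<delta>)"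
    using Sfac_orth_lower[OF qd \<alpha> k]
    unfolding moment_mul_diff by (simp add: right_diff_distrib sum_subtractf)
  also have "\<dots> = - (\<Sum>i<q. \<xi> i * poly_eval Ln (pt i) ?Q * poly_eval Ln (pt i) ?k)"
    using moment_pairing_pert[of ?k ?Q] Sfac_orth_lower[OF qd_pert \<alpha> k] by (simp add: eq_neg_iff_add_eq_0)
  also have "\<dots> = - (\<Sum>i<q. \<xi> i * poly_eval Ln (pt i) ?Q * kernel D m n (pt i) x)"
    by (simp add: kernel_eq_poly_eval[OF qd])
  finally show ?thesis by (simp add: algebra_simps)
qed

abbreviation "Mmat \<equiv> mat q q (\<lambda>(i,j). (if i = j then 1 else 0) + \<xi> i * kernel D m n (pt i) (pt j))"

lemma kernel_combination_eq_0:
  assumes v: "\<And>i. i < q \<Longrightarrow> v i + \<xi> i * (\<Sum>j<q. v j * kernel D m n (pt i) (pt j)) = 0"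
  shows "(\<lambda>\<gamma>. \<Sum>j<q. v j * kernel_coeffs D m n (pt j) \<gamma>) = (\<lambda>_. 0)"
    (is "?g = _")
proof (rule eq_0_if_orth_to_Sfac_rows[OF qd_pert, of n n])
  have eval_g: "poly_eval Ln (pt i) ?g = (\<Sum>j<q. v j * kernel D m n (pt i) (pt j))" for i
    unfolding poly_eval_sum poly_eval_scale kernel_eq_poly_eval[OF qd] ..
  show "\<forall>\<beta>. length \<beta> = D \<and> sum_list \<beta> < n \<longrightarrow> (\<Sum>\<delta>\<in>Ln. Sfac D m_pert \<beta> \<delta> * moment_mul Ln m_pert ?g \<delta>) = 0"
  proof (intro allI impI)
    fix \<beta> assume \<beta>: "length \<beta> = D \<and> sum_list \<beta> < n"
    let ?f = "Sfac D m_pert \<beta>"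
    have f: "\<forall>\<gamma>. \<gamma> \<notin> lowset_less D n \<longrightarrow> ?f \<gamma> = 0"
      using Sfac_eq_0[OF qd_pert] \<beta> by (auto simp: lowset_less_def lowset_def)
    have "(\<Sum>\<delta>\<in>Ln. ?g \<delta> * moment_mul Ln m ?f \<delta>) = (\<Sum>j<q. v j * poly_eval Ln (pt j) ?f)"
      unfolding sum_sum_mult sum_scale_mult kernel_reproducing[OF qd f] ..
    then have "(\<Sum>\<delta>\<in>Ln. ?f \<delta> * moment_mul Ln m_pert ?g \<delta>)
        = (\<Sum>i<q. (v i + \<xi> i * poly_eval Ln (pt i) ?g) * poly_eval Ln (pt i) ?f)"
      unfolding moment_pairing_pert moment_mul_pairing_sym[where b = ?f and m = m and a = ?g]
      by (simp add: distrib_right sum.distrib)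
    also have "\<dots> = 0" using v by (simp add: eval_g)
    finally show "(\<Sum>\<delta>\<in>Ln. ?f \<delta> * moment_mul Ln m_pert ?g \<delta>) = 0" .
  qed
qed (use kernel_coeffs_eq_0[OF qd] in simp_all)

lemma Mmat_det: "det Mmat \<noteq> 0"
proof (rule det_nonzero_if_kernel_trivial[where k = q])
  show "Mmat \<in> carrier_mat q q" by auto
  fix v :: "complex vec" assume v: "v \<in> carrier_vec q" and Mv: "Mmat *\<^sub>v v = 0\<^sub>v q"
  have row: "v $ i + \<xi> i * (\<Sum>j<q. v $ j * kernel D m n (pt i) (pt j)) = 0" if i: "i < q" for i
  proof -
    have "(Mmat *\<^sub>v v) $ i = v $ i + \<xi> i * (\<Sum>j<q. v $ j * kernel D m n (pt i) (pt j))"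
      by (rule id_plus_mult_vec_entry[OF v i])
    then show ?thesis using Mv i by simp
  qed
  define g where "g = (\<lambda>\<gamma>. \<Sum>j<q. v $ j * kernel_coeffs D m n (pt j) \<gamma>)"
  have "g = (\<lambda>_. 0)" unfolding g_def by (rule kernel_combination_eq_0) (rule row)
  moreover have "poly_eval Ln (pt i) g = (\<Sum>j<q. v $ j * kernel D m n (pt i) (pt j))" for i
    unfolding g_def poly_eval_sum poly_eval_scale kernel_eq_poly_eval[OF qd] ..
  ultimately have "(\<Sum>j<q. v $ j * kernel D m n (pt i) (pt j)) = 0" for i
    by (simp add: poly_eval_def)
  then have "v $ i = 0" if "i < q" for i using row[OF that] by simp
  then show "v = 0\<^sub>v q" using v by auto
qed

abbreviation "Pmat \<equiv> mat (length (mons D n)) q (\<lambda>(a,i). Pvec D m n (pt i) $$ (a,0))"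
abbreviation "Phat_mat \<equiv> mat (length (mons D n)) q (\<lambda>(a,i). poly_eval Ln (pt i) (Sfac D m_pert (mons D n ! a)))"

lemma Phat_mat_mult_Mmat: "Phat_mat * Mmat = Pmat"
proof (rule eq_matI)
  fix a j assume "a < dim_row Pmat" and "j < dim_col Pmat"
  then have a: "a < length (mons D n)" and j: "j < q" by auto
  let ?Q = "Sfac D m_pert (mons D n ! a)"
  have \<alpha>: "length (mons D n ! a) = D" "sum_list (mons D n ! a) = n" using mons_nth a by auto
  have "(Phat_mat * Mmat) $$ (a,j)
      = Phat_mat $$ (a,j) + (\<Sum>i<q. Phat_mat $$ (a,i) * \<xi> i * kernel D m n (pt i) (pt j))"
    by (rule mult_id_plus_entry) (use a j in auto)
  also have "\<dots> = poly_eval Ln (pt j) ?Q + (\<Sum>i<q. \<xi> i * poly_eval Ln (pt i) ?Q * kernel D m n (pt i) (pt j))"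
    using a j by (simp add: mult.commute)
  also have "\<dots> = poly_eval Ln (pt j) (Sfac D m (mons D n ! a))"
    by (subst Sfac_pert_poly_eval[OF \<alpha>, of "pt j"]) simp
  also have "\<dots> = Pmat $$ (a,j)" using a j Pvec_entry[OF qd order.refl a] by simp
  finally show "(Phat_mat * Mmat) $$ (a,j) = Pmat $$ (a,j)" .
qed auto

lemma Pmat_mult_minv_Mmat: "Pmat * minv Mmat = Phat_mat"
proof -
  have M: "Mmat \<in> carrier_mat q q" by auto
  have Mi: "minv Mmat \<in> carrier_mat q q" "Mmat * minv Mmat = 1\<^sub>m q"
    using minv_inverse[OF M Mmat_det] by auto
  have "Pmat * minv Mmat = (Phat_mat * Mmat) * minv Mmat" by (simp only: Phat_mat_mult_Mmat)
  also have "\<dots> = Phat_mat * (Mmat * minv Mmat)" by (rule assoc_mult_mat[OF _ M Mi(1)]) auto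
  also have "\<dots> = Phat_mat" using Mi by simp
  finally show ?thesis .
qed

lemma Hblk_pert_entry:
  assumes a: "a < length (mons D n)" and b: "b < length (mons D n)"
  shows "Hblk D m_pert n $$ (a,b) = Hblk D m n $$ (a,b) +
     (\<Sum>i<q. \<xi> i * poly_eval Ln (pt i) (Sfac D m_pert (mons D n ! a)) * poly_eval Ln (pt i) (Sfac D m (mons D n ! b)))"
proof -
  let ?Qa = "Sfac D m_pert (mons D n ! a)" let ?Qb = "Sfac D m_pert (mons D n ! b)"
  let ?Pa = "Sfac D m (mons D n ! a)" let ?Pb = "Sfac D m (mons D n ! b)"
  have \<alpha>: "length (mons D n ! a) = D" "sum_list (mons D n ! a) = n" using mons_nth a by auto
  have \<beta>: "length (mons D n ! b) = D" "sum_list (mons D n ! b) = n" using mons_nth b by auto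
  have "Hblk D m_pert n $$ (a,b) = (\<Sum>\<delta>\<in>Ln. ?Qb \<delta> * moment_mul Ln m_pert ?Qa \<delta>)"
    unfolding Hblk_entry[OF a b] by (rule sgs_eq_moment_pairing[OF qd_pert]) (use \<alpha> \<beta> in auto)
  also have "\<dots> = (\<Sum>\<delta>\<in>Ln. ?Pb \<delta> * moment_mul Ln m_pert ?Qa \<delta>)"
    using Sfac_orth_lower[OF qd_pert \<alpha> Sfac_diff_lower[OF qd qd_pert \<beta>]] unfolding sum_diff_mult by simp
  also have "\<dots> = (\<Sum>\<delta>\<in>Ln. ?Pb \<delta> * moment_mul Ln m ?Qa \<delta>)
      + (\<Sum>i<q. \<xi> i * poly_eval Ln (pt i) ?Qa * poly_eval Ln (pt i) ?Pb)"
    by (rule moment_pairing_pert)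
  also have "(\<Sum>\<delta>\<in>Ln. ?Pb \<delta> * moment_mul Ln m ?Qa \<delta>) = (\<Sum>\<delta>\<in>Ln. ?Qa \<delta> * moment_mul Ln m ?Pb \<delta>)"
    by (rule moment_mul_pairing_sym)
  also have "\<dots> = (\<Sum>\<delta>\<in>Ln. ?Pa \<delta> * moment_mul Ln m ?Pb \<delta>)"
    using Sfac_orth_lower[OF qd \<beta> Sfac_diff_lower[OF qd qd_pert \<alpha>]] unfolding sum_diff_mult by simp
  also have "\<dots> = Hblk D m n $$ (a,b)"
    unfolding Hblk_entry[OF a b] moment_mul_pairing_sym[of ?Pa]
    by (rule sgs_eq_moment_pairing[OF qd, symmetric]) (use \<alpha> \<beta> in auto)
  finally show ?thesis .
qed

lemma Pvec_dirac_pert: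
  "Pvec D m_pert n x = qdet Mmat (mat q 1 (\<lambda>(i,_). \<xi> i * kernel D m n (pt i) x)) Pmat (Pvec D m n x)"
  (is "_ = qdet _ ?B _ _")
  unfolding qdet_def Pmat_mult_minv_Mmat
proof (rule eq_matI)
  fix a j assume "a < dim_row (Pvec D m n x - Phat_mat * ?B)" "j < dim_col (Pvec D m n x - Phat_mat * ?B)"
  then have a: "a < length (mons D n)" and j: "j = 0" using Pvec_carrier[of D m n x] by auto
  let ?Q = "Sfac D m_pert (mons D n ! a)"
  have \<alpha>: "length (mons D n ! a) = D" "sum_list (mons D n ! a) = n" using mons_nth a by auto
  have "(Phat_mat * ?B) $$ (a,0) = (\<Sum>i<q. Phat_mat $$ (a,i) * ?B $$ (i,0))"
    by (rule index_mult_mat_sum) (use a in auto)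
  also have "\<dots> = (\<Sum>i<q. \<xi> i * poly_eval Ln (pt i) ?Q * kernel D m n (pt i) x)"
    by (rule sum.cong[OF refl]) (use a in \<open>simp add: mult_ac\<close>)
  finally have "(Pvec D m n x - Phat_mat * ?B) $$ (a,0)
      = poly_eval Ln x (Sfac D m (mons D n ! a)) - (\<Sum>i<q. \<xi> i * poly_eval Ln (pt i) ?Q * kernel D m n (pt i) x)"
    using a Pvec_entry[OF qd order.refl a] Pvec_carrier[of D m n x] by simp
  also have "\<dots> = poly_eval Ln x ?Q" by (rule Sfac_pert_poly_eval[OF \<alpha>, symmetric])
  also have "\<dots> = Pvec D m_pert n x $$ (a,0)" using Pvec_entry[OF qd_pert order.refl a] by simp
  finally show "Pvec D m_pert n x $$ (a,j) = (Pvec D m n x - Phat_mat * ?B) $$ (a,j)" using j by simp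
qed (use Pvec_carrier[of D _ n x] in auto)

lemma Hblk_dirac_pert:
  "Hblk D m_pert n =
     qdet Mmat (mat q (length (mons D n)) (\<lambda>(i,a). - \<xi> i * Pvec D m n (pt i) $$ (a,0))) Pmat (Hblk D m n)"
  (is "_ = qdet _ ?B _ _")
  unfolding qdet_def Pmat_mult_minv_Mmat
proof (rule eq_matI)
  fix a b assume "a < dim_row (Hblk D m n - Phat_mat * ?B)" "b < dim_col (Hblk D m n - Phat_mat * ?B)"
  then have a: "a < length (mons D n)" and b: "b < length (mons D n)" using Hblk_carrier[of D m n] by auto
  have "(Phat_mat * ?B) $$ (a,b) = (\<Sum>i<q. Phat_mat $$ (a,i) * ?B $$ (i,b))"
    by (rule index_mult_mat_sum) (use a b in auto)
  also have "\<dots> = - (\<Sum>i<q. \<xi> i * poly_eval Ln (pt i) (Sfac D m_pert (mons D n ! a))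
      * poly_eval Ln (pt i) (Sfac D m (mons D n ! b)))"
    unfolding sum_negf[symmetric]
    by (rule sum.cong[OF refl]) (use a b Pvec_entry[OF qd order.refl b] in \<open>simp add: mult_ac\<close>)
  finally show "Hblk D m_pert n $$ (a,b) = (Hblk D m n - Phat_mat * ?B) $$ (a,b)"
    using a b Hblk_pert_entry[OF a b] Hblk_carrier[of D m n] by simp
qed (use Hblk_carrier[of D _ n] in auto)

end

theorem mainTheorem16:
  fixes D q n :: nat and m :: "nat list \<Rightarrow> complex" and \<xi> :: "nat \<Rightarrow> complex"
    and pts :: "nat \<Rightarrow> real list" and x :: "complex list"
  assumes "D \<ge> 1"
    and "quasi_definite D m"
    and "\<forall>i<q. length (pts i) = D"
    and "inj_on pts {..<q}"
    and "quasi_definite D (dirac_pert m q \<xi> pts)"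
    and "n \<ge> 1"
    and "length x = D"
  shows "Pvec D (dirac_pert m q \<xi> pts) n x =
           qdet (mat q q (\<lambda>(i,j). (if i = j then 1 else 0)
                     + \<xi> i * kernel D m n (map of_real (pts i)) (map of_real (pts j))))
                (mat q 1 (\<lambda>(i,_). \<xi> i * kernel D m n (map of_real (pts i)) x))
                (mat (length (mons D n)) q (\<lambda>(a,i). Pvec D m n (map of_real (pts i)) $$ (a,0)))
                (Pvec D m n x)
       \<and> Hblk D (dirac_pert m q \<xi> pts) n =
           qdet (mat q q (\<lambda>(i,j). (if i = j then 1 else 0)
                     + \<xi> i * kernel D m n (map of_real (pts i)) (map of_real (pts j))))
                (mat q (length (mons D n)) (\<lambda>(i,a). - \<xi> i * Pvec D m n (map of_real (pts i)) $$ (a,0)))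
                (mat (length (mons D n)) q (\<lambda>(a,i). Pvec D m n (map of_real (pts i)) $$ (a,0)))
                (Hblk D m n)"
  using Pvec_dirac_pert[OF assms(2,5,3)] Hblk_dirac_pert[OF assms(2,5,3)] by simp

end
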